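(* Suppose $\sigma:\overline{\mathbb F}\to\overline{\mathbb F}$ satisfies Condition 1 with constants $c_1,c_2,\eta\in\mathbb F$, and let $z\in\mathbb F$ with $|z|\le 1^+$. Then there exists a depth-1 $\sigma$-network $\mu_z:\overline{\mathbb F}\to\overline{\mathbb F}$ (i.e., a map $x\mapsto(x\otimes w)\oplus b$ with $w,b\in\mathbb F$) such that one of the following holds: (a) $\gamma(\mu_z^\sharp(\langle-1,z\rangle))\subset[-\Omega,\eta]$ and $\gamma(\mu_z^\sharp(\langle z^+,1\rangle))\subset[\eta^+,\Omega]$; (b) $\gamma(\mu_z^\sharp(\langle-1,z\rangle))\subset[\eta^+,\Omega]$ and $\gamma(\mu_z^\sharp(\langle z^+,1\rangle))\subset[-\Omega,\eta]$.
   Context: Floating point. Fix integers $E\ge 5$ and $M$ with $2^{E-1}\ge M\ge 3$; $\mathfrak e_{\min}=-2^{E-1}+2$, $\mathfrak e_{\max}=2^{E-1}-1$. $\mathbb F=\{(-1)^b(s_0.s_1\dots s_M)_2\cdot 2^e: b,s_i\in\{0,1\},e\in\{\mathfrak e_{\min},\dots,\mathfrak e_{\max}\}\}$, $\overline{\mathbb F}=\mathbb F\cup\{-\infty,+\infty,\mathrm{NaN}\}$, $\Omega=2^{\mathfrak e_{\max}}(2-2^{-M})$, $\varepsilon=2^{-M-1}$. $x^+$ is the next larger element of $\overline{\mathbb F}\setminus\{\mathrm{NaN}\}$ (so $1^+=1+2^{-M}$). $\mathrm{rnd}$ is round-to-nearest-ties-to-even with overflow to $\pm\infty$ at $|x|\ge\Omega+2^{\mathfrak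 e_{\max}}\varepsilon$; $x\oplus y=\mathrm{rnd}(x+y)$, $x\otimes y=\mathrm{rnd}(xy)$ for finite operands (IEEE-754 otherwise). Intervals: $\mathbb I=\{\langle a,b\rangle:a,b\in\overline{\mathbb F}\setminus\{\mathrm{NaN}\},a\le b\}\cup\{\top\}$, $\gamma(\langle a,b\rangle)=[a,b]\cap\overline{\mathbb F}$, $\gamma(\top)=\overline{\mathbb F}$. $\langle a,b\rangle\odot^\sharp\langle c,d\rangle$ ($\odot\in\{\oplus,\otimes\}$) is $\langle\min S,\max S\rangle$ for $S=\{a\odot c,a\odot d,b\odot c,b\odot d\}$, or $\top$ if $\mathrm{NaN}\in S$ or an operand is $\top$. For $\mu_z(x)=(x\otimes w)\oplus b$, $\mu_z^\sharp(\mathcal I)=(\mathcal I\otimes^\sharp\langle w,w\rangle)\oplus^\sharp\langle b,b\rangle$. Condition 1 with constants $c_1,c_2,\eta$: (C1) $\sigma(c_1)=0$, $|\sigma(c_2)|\in[\frac\varepsilon2+2\varepsilon^2,\frac54-2\varepsilon]$, $\max\{|c_1|,|c_2|\}\ge2^{\mathfrak e_{\min}+1}$, and $\sigma(x)$ between $\sigma(c_1),\sigma(c_2)$ for all $x$ between $c_1,c_2$; (C2) $|\eta|\in[2^{\mathfrak e_{\min}+5},4-8\varepsilon]$, $|\sigma(\eta)|,|\sigma(\eta^+)|\in[2^{\mathfrak e_{\min}+5},2^{\mathfrak e_{\max}-6}|\eta|]$, and for all $x,y\in\mathbb F$ with $x\le\eta<\eta^+\le y$, either $\sigma(x)\le\sigma(\eta)<\sigma(\eta^+)\le\sigma(y)$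 or $\sigma(x)\ge\sigma(\eta)>\sigma(\eta^+)\ge\sigma(y)$; (C3) there is $\lambda\in[0,2^{\mathfrak e_{\max}-7}\min\{|\sigma(\eta)|,2^{M+3}\}]$ with $|\sigma(x)-\sigma(\eta)|\le\lambda|x-\eta|$ and $|\sigma(y)-\sigma(\eta^+)|\le\lambda|y-\eta^+|$ for all $x,y\in\mathbb F$ with $x\le\eta<\eta^+\le y$. *)

theory Defs
  imports Complex_Main
begin

definition emin :: "nat \<Rightarrow> int" where
  "emin E = - (2 ^ (E - 1)) + 2"

definition emax :: "nat \<Rightarrow> int" where
  "emax E = 2 ^ (E - 1) - 1"

text \<open>The finite floats F (as real numbers): (-1)^b (s0.s1...sM)_2 * 2^e,
  i.e. m * 2^(e-M) with |m| < 2^(M+1) an integer and emin <= e <= emax.\<close>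
definition fl :: "nat \<Rightarrow> nat \<Rightarrow> real set" where
  "fl E M = {of_int m * 2 powr (real_of_int (e - int M)) | m e.
              \<bar>m\<bar> < 2 ^ (M + 1) \<and> emin E \<le> e \<and> e \<le> emax E}"

definition Omega :: "nat \<Rightarrow> nat \<Rightarrow> real" where
  "Omega E M = 2 powr (real_of_int (emax E)) * (2 - 2 powr (- real M))"

definition feps :: "nat \<Rightarrow> real" where
  "feps M = 2 powr (- real M - 1)"

text \<open>Even significand (canonical representation: normalized, or subnormal at emin).\<close>
definition fl_even :: "nat \<Rightarrow> nat \<Rightarrow> real \<Rightarrow> bool" where
  "fl_even E M y = (\<exists>m e. y = of_int m * 2 powr (real_of_int (e - int M)) \<and> even m
       \<and> \<bar>m\<bar> < 2 ^ (M + 1) \<and> emin E \<le> e \<and> e \<le> emax E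
       \<and> (e = emin E \<or> 2 ^ M \<le> \<bar>m\<bar>))"

datatype ext = Fin real | PInf | NInf | NaN

definition fl_bar :: "nat \<Rightarrow> nat \<Rightarrow> ext set" where
  "fl_bar E M = Fin ` fl E M \<union> {PInf, NInf, NaN}"

text \<open>Round to nearest, ties to even, with overflow.\<close>
definition rnd :: "nat \<Rightarrow> nat \<Rightarrow> real \<Rightarrow> ext" where
  "rnd E M x =
     (if Omega E M + 2 powr (real_of_int (emax E)) * feps M \<le> x then PInf
      else if x \<le> - (Omega E M + 2 powr (real_of_int (emax E)) * feps M) then NInf
      else Fin (THE y. y \<in> fl E M \<and> (\<forall>z \<in> fl E M. \<bar>x - y\<bar> \<le> \<bar>x - z\<bar>) \<and>
                 ((\<forall>z \<in> fl E M. \<bar>x - z\<bar> = \<bar>x - y\<bar> \<longrightarrow> z = y) \<or> fl_even E M y)))"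

fun fadd :: "nat \<Rightarrow> nat \<Rightarrow> ext \<Rightarrow> ext \<Rightarrow> ext" where
  "fadd E M (Fin a) (Fin b) = rnd E M (a + b)"
| "fadd E M NaN y = NaN"
| "fadd E M x NaN = NaN"
| "fadd E M PInf NInf = NaN"
| "fadd E M NInf PInf = NaN"
| "fadd E M PInf y = PInf"
| "fadd E M x PInf = PInf"
| "fadd E M NInf y = NInf"
| "fadd E M x NInf = NInf"

fun ext_sgn :: "ext \<Rightarrow> real" where
  "ext_sgn (Fin a) = sgn a"
| "ext_sgn PInf = 1"
| "ext_sgn NInf = -1"
| "ext_sgn NaN = 0"

fun fmul :: "nat \<Rightarrow> nat \<Rightarrow> ext \<Rightarrow> ext \<Rightarrow> ext" where
  "fmul E M (Fin a) (Fin b) = rnd E M (a * b)"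
| "fmul E M NaN y = NaN"
| "fmul E M x NaN = NaN"
| "fmul E M x y = (if ext_sgn x * ext_sgn y = 0 then NaN
                   else if ext_sgn x * ext_sgn y > 0 then PInf else NInf)"

fun ext_le :: "ext \<Rightarrow> ext \<Rightarrow> bool" where
  "ext_le (Fin a) (Fin b) = (a \<le> b)"
| "ext_le NaN y = False"
| "ext_le x NaN = False"
| "ext_le NInf y = True"
| "ext_le x PInf = True"
| "ext_le x y = False"

definition ext_less :: "ext \<Rightarrow> ext \<Rightarrow> bool" where
  "ext_less x y = (ext_le x y \<and> \<not> ext_le y x)"

definition ext_min :: "ext \<Rightarrow> ext \<Rightarrow> ext" where
  "ext_min x y = (if ext_le x y then x else y)"

definition ext_max :: "ext \<Rightarrow> ext \<Rightarrow> ext" where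
  "ext_max x y = (if ext_le x y then y else x)"

text \<open>Successor x^+ of a finite float below Omega.\<close>
definition fsucc :: "nat \<Rightarrow> nat \<Rightarrow> real \<Rightarrow> real" where
  "fsucc E M x = Min {y \<in> fl E M. x < y}"

datatype itv = Itv ext ext | Top

definition gamma :: "nat \<Rightarrow> nat \<Rightarrow> itv \<Rightarrow> ext set" where
  "gamma E M I = (case I of Top \<Rightarrow> fl_bar E M
                  | Itv a b \<Rightarrow> {x \<in> fl_bar E M. ext_le a x \<and> ext_le x b})"

definition abs_op :: "(ext \<Rightarrow> ext \<Rightarrow> ext) \<Rightarrow> itv \<Rightarrow> itv \<Rightarrow> itv" where
  "abs_op f I J = (case (I, J) of
      (Itv a b, Itv c d) \<Rightarrow>
        (if NaN \<in> {f a c, f a d, f b c, f b d} then Top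
         else Itv (ext_min (ext_min (f a c) (f a d)) (ext_min (f b c) (f b d)))
                  (ext_max (ext_max (f a c) (f a d)) (ext_max (f b c) (f b d))))
    | _ \<Rightarrow> Top)"

definition net1 :: "nat \<Rightarrow> nat \<Rightarrow> real \<Rightarrow> real \<Rightarrow> ext \<Rightarrow> ext" where
  "net1 E M w b x = fadd E M (fmul E M x (Fin w)) (Fin b)"

definition net1_sharp :: "nat \<Rightarrow> nat \<Rightarrow> real \<Rightarrow> real \<Rightarrow> itv \<Rightarrow> itv" where
  "net1_sharp E M w b I =
     abs_op (fadd E M) (abs_op (fmul E M) I (Itv (Fin w) (Fin w))) (Itv (Fin b) (Fin b))"

definition cond1 :: "nat \<Rightarrow> nat \<Rightarrow> (ext \<Rightarrow> ext) \<Rightarrow> real \<Rightarrow> real \<Rightarrow> real \<Rightarrow> bool" where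
  "cond1 E M \<sigma> c1 c2 \<eta> = (
    \<comment> \<open>(C1)\<close>
    (\<sigma> (Fin c1) = Fin 0 \<and>
     (\<exists>s2. \<sigma> (Fin c2) = Fin s2 \<and>
        feps M / 2 + 2 * feps M ^ 2 \<le> \<bar>s2\<bar> \<and> \<bar>s2\<bar> \<le> 5/4 - 2 * feps M \<and>
        (\<forall>x \<in> fl E M. min c1 c2 \<le> x \<and> x \<le> max c1 c2 \<longrightarrow>
           (\<exists>r. \<sigma> (Fin x) = Fin r \<and> min 0 s2 \<le> r \<and> r \<le> max 0 s2))) \<and>
     2 powr (real_of_int (emin E + 1)) \<le> max \<bar>c1\<bar> \<bar>c2\<bar>) \<and>
    \<comment> \<open>(C2)\<close>
    (2 powr (real_of_int (emin E + 5)) \<le> \<bar>\<eta>\<bar> \<and> \<bar>\<eta>\<bar> \<le> 4 - 8 * feps M \<and>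
     (\<exists>s t. \<sigma> (Fin \<eta>) = Fin s \<and> \<sigma> (Fin (fsucc E M \<eta>)) = Fin t \<and>
        2 powr (real_of_int (emin E + 5)) \<le> \<bar>s\<bar> \<and>
        \<bar>s\<bar> \<le> 2 powr (real_of_int (emax E - 6)) * \<bar>\<eta>\<bar> \<and>
        2 powr (real_of_int (emin E + 5)) \<le> \<bar>t\<bar> \<and>
        \<bar>t\<bar> \<le> 2 powr (real_of_int (emax E - 6)) * \<bar>\<eta>\<bar>) \<and>
     (\<forall>x \<in> fl E M. \<forall>y \<in> fl E M. x \<le> \<eta> \<and> fsucc E M \<eta> \<le> y \<longrightarrow>
        (ext_le (\<sigma> (Fin x)) (\<sigma> (Fin \<eta>)) \<and> ext_less (\<sigma> (Fin \<eta>)) (\<sigma> (Fin (fsucc E M \<eta>))) \<and>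
         ext_le (\<sigma> (Fin (fsucc E M \<eta>))) (\<sigma> (Fin y))) \<or>
        (ext_le (\<sigma> (Fin \<eta>)) (\<sigma> (Fin x)) \<and> ext_less (\<sigma> (Fin (fsucc E M \<eta>))) (\<sigma> (Fin \<eta>)) \<and>
         ext_le (\<sigma> (Fin y)) (\<sigma> (Fin (fsucc E M \<eta>)))))) \<and>
    \<comment> \<open>(C3)\<close>
    (\<exists>s t lam. \<sigma> (Fin \<eta>) = Fin s \<and> \<sigma> (Fin (fsucc E M \<eta>)) = Fin t \<and>
       0 \<le> lam \<and> lam \<le> 2 powr (real_of_int (emax E - 7)) * min \<bar>s\<bar> (2 ^ (M + 3)) \<and>
       (\<forall>x \<in> fl E M. \<forall>y \<in> fl E M. x \<le> \<eta> \<and> fsucc E M \<eta> \<le> y \<longrightarrow>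
          (\<exists>r. \<sigma> (Fin x) = Fin r \<and> \<bar>r - s\<bar> \<le> lam * \<bar>x - \<eta>\<bar>) \<and>
          (\<exists>r. \<sigma> (Fin y) = Fin r \<and> \<bar>r - t\<bar> \<le> lam * \<bar>y - fsucc E M \<eta>\<bar>))))"

end

theory Submission
  imports Defs
begin

text \<open>
  Multiplication by a power of two is exact. So take as weight \<open>\<plusminus>2 ^ k\<close>, where \<open>2 ^ k\<close> carries
  the unit in the last place of the anchor input (\<open>z\<close>, or \<open>z\<^sup>+\<close> if \<open>z < 0\<close>) onto that of the
  anchor output (\<open>\<eta>\<close>, or \<open>\<eta>\<^sup>+\<close> if \<open>\<eta> < 0\<close>), and as bias the anchor output minus the scaled
  anchor input, which is again a float. The network then maps the anchor input exactly to the
  anchor output, and the other input of the pair \<open>z, z\<^sup>+\<close> at least one unit in the last place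
  beyond it, i.e. onto the other side of the pair \<open>\<eta>, \<eta>\<^sup>+\<close>. Rounding to nearest is monotone
  (ties to even is well defined, as of two adjacent floats exactly one has an even mantissa),
  so the bounds at the anchors carry over to the interval endpoints \<open>-1\<close> and \<open>1\<close>.
\<close>

section \<open>Binary floating-point numbers\<close>

definition pow2 :: "int \<Rightarrow> real" where
  "pow2 e = 2 powr of_int e"

lemma pow2_pos [simp]: "0 < pow2 e"
  by (simp add: pow2_def)

lemma pow2_nonneg [simp]: "0 \<le> pow2 e"
  by (simp add: pow2_def)

lemma pow2_not_nonpos [simp]: "\<not> pow2 e \<le> 0"
  by (simp add: not_le)

lemma pow2_add: "pow2 (a + b) = pow2 a * pow2 b"
  by (simp add: pow2_def powr_add)

lemma pow2_le_iff [simp]: "pow2 a \<le> pow2 b \<longleftrightarrow> a \<le> b"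
  by (simp add: pow2_def)

lemma pow2_less_iff [simp]: "pow2 a < pow2 b \<longleftrightarrow> a < b"
  by (simp add: pow2_def)

lemma pow2_of_nat [simp]: "pow2 (int n) = 2 ^ n"
  by (simp add: pow2_def powr_realpow)

lemma pow2_numeral [simp]: "pow2 (numeral n) = 2 ^ numeral n"
  using pow2_of_nat[of "numeral n"] by simp

lemma pow2_0 [simp]: "pow2 0 = 1" and pow2_1 [simp]: "pow2 1 = 2"
  by (simp_all add: pow2_def)

lemma pow2_shift: "a \<le> b \<Longrightarrow> pow2 b = 2 ^ nat (b - a) * pow2 a"
  using pow2_add[of "b - a" a] pow2_of_nat[of "nat (b - a)"] by simp

lemma int_multiple_ge: "0 < P \<Longrightarrow> 0 < of_int n * P \<Longrightarrow> P \<le> of_int n * (P::real)"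
  by (simp add: zero_less_mult_iff mult_le_cancel_right1)

lemma int_multiple_le_eq_1: "0 < P \<Longrightarrow> 0 < of_int n * P \<Longrightarrow> of_int n * P \<le> (P::real) \<Longrightarrow> n = 1"
proof -
  assume P: "0 < P" "0 < of_int n * P" "of_int n * P \<le> P"
  then have "0 < n"
    by (auto simp: zero_less_mult_iff)
  moreover have "of_int n \<le> (1::real)"
    using P(1,3) mult_right_le_imp_le[of "of_int n" P 1] by simp
  ultimately show "n = 1"
    by linarith
qed

lemma fl_iff: "x \<in> fl E M \<longleftrightarrow>
    (\<exists>m e. x = of_int m * pow2 (e - int M) \<and> \<bar>m\<bar> < 2 ^ (M + 1) \<and> emin E \<le> e \<and> e \<le> emax E)"
  by (auto simp: fl_def pow2_def)

lemma fl_intro: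
  "\<bar>m\<bar> < 2 ^ (M + 1) \<Longrightarrow> emin E \<le> e \<Longrightarrow> e \<le> emax E \<Longrightarrow> of_int m * pow2 (e - int M) \<in> fl E M"
  by (auto simp: fl_iff)

lemma fl_minus: "x \<in> fl E M \<Longrightarrow> - x \<in> fl E M"
proof -
  assume "x \<in> fl E M"
  then obtain m e where x: "x = of_int m * pow2 (e - int M)" "\<bar>m\<bar> < 2 ^ (M + 1)"
    "emin E \<le> e" "e \<le> emax E"
    by (auto simp: fl_iff)
  then have "of_int (- m) * pow2 (e - int M) \<in> fl E M"
    by (intro fl_intro) auto
  then show ?thesis
    using x(1) by simp
qed

lemma abs_mantissa_less: "\<bar>m\<bar> < (2::int) ^ (M + 1) \<Longrightarrow> \<bar>of_int m * pow2 (e - int M)\<bar> < pow2 (e + 1)"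
proof -
  assume "\<bar>m\<bar> < (2::int) ^ (M + 1)"
  then have "real_of_int \<bar>m\<bar> < 2 ^ (M + 1)"
    by (metis of_int_less_iff of_int_numeral of_int_power)
  then have "real_of_int \<bar>m\<bar> * pow2 (e - int M) < 2 ^ (M + 1) * pow2 (e - int M)"
    by simp
  also have "\<dots> = pow2 (e + 1)"
    using pow2_add[of "int (M + 1)" "e - int M"] pow2_of_nat[of "M + 1"] by (simp add: add.commute)
  finally show ?thesis
    by (simp add: abs_mult)
qed

lemma Omega_eq: "Omega E M = of_int (2 ^ (M + 1) - 1) * pow2 (emax E - int M)"
proof -
  have "Omega E M = 2 * pow2 (emax E) - pow2 (emax E) * pow2 (- int M)"
    by (simp add: Omega_def pow2_def algebra_simps)
  also have "\<dots> = 2 * pow2 (emax E) - pow2 (emax E - int M)"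
    using pow2_add[of "emax E" "- int M"] by simp
  also have "\<dots> = (2 * 2 ^ M - 1) * pow2 (emax E - int M)"
    using pow2_add[of "int M" "emax E - int M"] by (simp add: algebra_simps)
  finally show ?thesis
    by simp
qed

lemma Omega_ge_pow2_emax: "pow2 (emax E) \<le> Omega E M"
proof -
  have "(2::real) powr (- real M) \<le> 2 powr 0"
    by (rule powr_mono) auto
  then show ?thesis
    by (simp add: Omega_def pow2_def)
qed

lemma fl_abs_le_Omega: "x \<in> fl E M \<Longrightarrow> \<bar>x\<bar> \<le> Omega E M"
proof -
  assume "x \<in> fl E M"
  then obtain m e where x: "x = of_int m * pow2 (e - int M)" "\<bar>m\<bar> < 2 ^ (M + 1)" "e \<le> emax E"
    by (auto simp: fl_iff)
  have "real_of_int \<bar>m\<bar> \<le> of_int (2 ^ (M + 1) - 1)"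
    using x(2) by linarith
  moreover have "pow2 (e - int M) \<le> pow2 (emax E - int M)"
    using x(3) by simp
  ultimately have "of_int \<bar>m\<bar> * pow2 (e - int M) \<le> of_int (2 ^ (M + 1) - 1) * pow2 (emax E - int M)"
    by (intro mult_mono) auto
  then show ?thesis
    by (simp add: x(1) abs_mult Omega_eq)
qed

lemma pow2_fl: "emin E \<le> k \<Longrightarrow> k \<le> emax E \<Longrightarrow> pow2 k \<in> fl E M"
  using fl_intro[where m = "2 ^ M" and e = k] pow2_add[of "int M" "k - int M"] by simp

lemma fl_finite: "finite (fl E M)"
proof -
  let ?rep = "\<lambda>(m, e). of_int m * pow2 (e - int M)"
  have "fl E M \<subseteq> ?rep ` ({- (2 ^ (M + 1)) .. 2 ^ (M + 1)} \<times> {emin E .. emax E})"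
  proof
    fix x
    assume "x \<in> fl E M"
    then obtain m e where "x = of_int m * pow2 (e - int M)" "\<bar>m\<bar> < 2 ^ (M + 1)"
      "emin E \<le> e" "e \<le> emax E"
      by (auto simp: fl_iff)
    then show "x \<in> ?rep ` ({- (2 ^ (M + 1)) .. 2 ^ (M + 1)} \<times> {emin E .. emax E})"
      by (auto intro!: image_eqI[of _ _ "(m, e)"])
  qed
  then show ?thesis
    by (rule finite_subset) auto
qed

lemma emin_eq: "emin E = 1 - emax E"
  by (simp add: emin_def emax_def)

locale float_format =
  fixes E M :: nat
  assumes exponent_bits: "5 \<le> E" and mantissa_bits: "1 \<le> M"
begin

lemma emax_ge: "15 \<le> emax E"
proof -
  have "(2::int) ^ 4 \<le> 2 ^ (E - 1)"
    by (rule power_increasing) (use exponent_bits in auto)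
  then show ?thesis
    by (simp add: emax_def)
qed

lemma emin_le_emax: "emin E \<le> emax E"
  using emax_ge emin_eq by simp

lemma emin_neg: "emin E < 0"
  using emax_ge emin_eq by simp

lemma fl_zero: "0 \<in> fl E M"
  using fl_intro[where m = 0 and e = "emin E"] emin_le_emax by simp

lemma one_fl: "1 \<in> fl E M"
  using pow2_fl[where k = 0] emax_ge emin_eq by simp

lemma two_fl: "2 \<in> fl E M"
  using pow2_fl[where k = 1] emax_ge emin_eq by simp

lemma Omega_fl: "Omega E M \<in> fl E M"
  unfolding Omega_eq by (rule fl_intro) (auto simp: emin_le_emax)

lemma pow2_emax_gt_8: "8 < pow2 (emax E)"
  using pow2_less_iff[of 3 "emax E"] emax_ge by simp

lemma Omega_gt_4: "4 < Omega E M"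
  using pow2_emax_gt_8 Omega_ge_pow2_emax[of E M] by simp

abbreviation overflow_threshold :: real where
  "overflow_threshold \<equiv> Omega E M + 2 powr real_of_int (emax E) * feps M"

lemma Omega_less_overflow: "Omega E M < overflow_threshold"
  by (simp add: feps_def)

lemma pow2_emax_add_4_less_overflow: "pow2 (emax E) + 4 < overflow_threshold"
proof -
  have "overflow_threshold = 2 * pow2 (emax E) - pow2 (emax E) * pow2 (- int M - 1)"
    by (simp add: Omega_def feps_def pow2_def powr_add[symmetric] powr_diff algebra_simps)
  moreover have "pow2 (- int M - 1) \<le> 1 / 2"
    using pow2_le_iff[of "- int M - 1" "- 1"] by (simp add: pow2_def)
  then have "pow2 (emax E) * pow2 (- int M - 1) \<le> pow2 (emax E) * (1 / 2)"
    by (rule mult_left_mono) simp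
  ultimately show ?thesis
    using pow2_emax_gt_8 by linarith
qed

text \<open>A mantissa of exactly \<open>2 ^ (M + 1)\<close> or an exponent above \<open>emax E\<close> can be renormalised.\<close>
lemma fl_intro_range:
  assumes "\<bar>m\<bar> \<le> 2 ^ (M + 1)" "emin E \<le> e" "\<bar>of_int m * pow2 (e - int M)\<bar> \<le> Omega E M"
  shows "of_int m * pow2 (e - int M) \<in> fl E M"
proof (cases "emax E \<le> e")
  case True
  define m' where "m' = m * 2 ^ nat (e - emax E)"
  have eq: "of_int m * pow2 (e - int M) = of_int m' * pow2 (emax E - int M)"
    using pow2_shift[of "emax E - int M" "e - int M"] True by (simp add: m'_def)
  have "of_int \<bar>m'\<bar> * pow2 (emax E - int M) \<le> of_int (2 ^ (M + 1) - 1) * pow2 (emax E - int M)"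
    using assms(3) unfolding eq Omega_eq by (simp add: abs_mult)
  then have "real_of_int \<bar>m'\<bar> \<le> of_int (2 ^ (M + 1) - 1)"
    by simp
  then have "\<bar>m'\<bar> < 2 ^ (M + 1)"
    by linarith
  then show ?thesis
    unfolding eq by (intro fl_intro) (auto simp: emin_le_emax)
next
  case False
  show ?thesis
  proof (cases "\<bar>m\<bar> < 2 ^ (M + 1)")
    case True
    then show ?thesis
      using False assms by (intro fl_intro) auto
  next
    case mantissa_overflow: False
    then have "m = 2 * 2 ^ M \<or> m = 2 * (- (2 ^ M))"
      using assms(1) by auto
    then obtain s where s: "m = 2 * s" "\<bar>s\<bar> = 2 ^ M"
      by (metis abs_minus_cancel abs_of_nonneg zero_le_power zero_le_numeral)
    have "of_int m * pow2 (e - int M) = of_int s * pow2 ((e + 1) - int M)"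
      using pow2_add[of "e - int M" 1] by (simp add: s(1) algebra_simps)
    moreover have "of_int s * pow2 ((e + 1) - int M) \<in> fl E M"
      using s(2) False assms(2) by (intro fl_intro) auto
    ultimately show ?thesis
      by simp
  qed
qed

text \<open>The representation with the least exponent: normal, or subnormal at \<open>emin E\<close>.\<close>
definition canonical_rep :: "real \<Rightarrow> int \<Rightarrow> int \<Rightarrow> bool" where
  "canonical_rep x m e \<longleftrightarrow> x = of_int m * pow2 (e - int M) \<and> \<bar>m\<bar> < 2 ^ (M + 1)
      \<and> emin E \<le> e \<and> e \<le> emax E \<and> (e = emin E \<or> 2 ^ M \<le> \<bar>m\<bar>)"

lemma canonical_rep_exists:
  assumes "x \<in> fl E M"
  obtains m e where "canonical_rep x m e"
proof -
  define S where "S = {e. emin E \<le> e \<and> e \<le> emax E \<and>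
    (\<exists>m. x = of_int m * pow2 (e - int M) \<and> \<bar>m\<bar> < 2 ^ (M + 1))}"
  have fin: "finite S"
    by (rule finite_subset[of _ "{emin E..emax E}"]) (auto simp: S_def)
  have "S \<noteq> {}"
    using assms by (auto simp: S_def fl_iff)
  then have "Min S \<in> S"
    using fin by simp
  then obtain m where m: "x = of_int m * pow2 (Min S - int M)" "\<bar>m\<bar> < 2 ^ (M + 1)"
    "emin E \<le> Min S" "Min S \<le> emax E"
    by (auto simp: S_def)
  have "Min S = emin E \<or> 2 ^ M \<le> \<bar>m\<bar>"
  proof (rule ccontr)
    assume not_canonical: "\<not> ?thesis"
    have "x = of_int (2 * m) * pow2 ((Min S - 1) - int M)"
      using pow2_add[of "(Min S - 1) - int M" 1] by (simp add: m(1) algebra_simps)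
    moreover have "\<bar>2 * m\<bar> < 2 ^ (M + 1)"
      using not_canonical by (simp add: abs_mult)
    ultimately have "Min S - 1 \<in> S"
      using not_canonical m(3,4) unfolding S_def by (intro CollectI conjI exI) auto
    then show False
      using Min_le[OF fin, of "Min S - 1"] by simp
  qed
  then show ?thesis
    using m that by (auto simp: canonical_rep_def)
qed

lemma canonical_rep_fl: "canonical_rep x m e \<Longrightarrow> x \<in> fl E M"
  by (auto simp: canonical_rep_def fl_iff)

lemma canonical_rep_minus: "canonical_rep x m e \<Longrightarrow> canonical_rep (- x) (- m) e"
  by (auto simp: canonical_rep_def)

lemma canonical_rep_abs_less: "canonical_rep x m e \<Longrightarrow> \<bar>x\<bar> < pow2 (e + 1)"
  using abs_mantissa_less by (auto simp: canonical_rep_def)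

lemma canonical_rep_abs_ge: "canonical_rep x m e \<Longrightarrow> e = emin E \<or> pow2 e \<le> \<bar>x\<bar>"
proof -
  assume c: "canonical_rep x m e"
  show ?thesis
  proof (cases "e = emin E")
    case False
    then have "2 ^ M \<le> \<bar>m\<bar>"
      using c by (auto simp: canonical_rep_def)
    then have "(2::real) ^ M \<le> of_int \<bar>m\<bar>"
      by (metis of_int_le_iff of_int_numeral of_int_power)
    then have "2 ^ M * pow2 (e - int M) \<le> of_int \<bar>m\<bar> * pow2 (e - int M)"
      by simp
    moreover have "2 ^ M * pow2 (e - int M) = pow2 e"
      using pow2_add[of "int M" "e - int M"] by simp
    ultimately show ?thesis
      using c by (auto simp: canonical_rep_def abs_mult)
  qed simp
qed

lemma canonical_rep_exp_mono:
  assumes "canonical_rep x m e" "canonical_rep y n f" "\<bar>x\<bar> \<le> \<bar>y\<bar>"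
  shows "e \<le> f"
proof (cases "e = emin E")
  case True
  then show ?thesis
    using assms(2) by (simp add: canonical_rep_def)
next
  case False
  then have "pow2 e < pow2 (f + 1)"
    using canonical_rep_abs_ge[OF assms(1)] canonical_rep_abs_less[OF assms(2)] assms(3) by linarith
  then show ?thesis
    by simp
qed

lemma canonical_rep_exp_less:
  "canonical_rep x m e \<Longrightarrow> \<bar>x\<bar> < pow2 j \<Longrightarrow> emin E < j \<Longrightarrow> e < j"
  using canonical_rep_abs_ge[of x m e] by (metis not_less order.strict_trans1 pow2_le_iff)

lemma fl_ge_add_ulp:
  assumes c: "canonical_rep y m e" and "0 \<le> y" "f \<in> fl E M" "y < f"
  shows "y + pow2 (e - int M) \<le> f"
proof -
  obtain n g where n: "f = of_int n * pow2 (g - int M)" "\<bar>n\<bar> < 2 ^ (M + 1)" "emin E \<le> g"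
    using assms(3) by (auto simp: fl_iff)
  show ?thesis
  proof (cases "e \<le> g")
    case True
    have "f = of_int (n * 2 ^ nat (g - e)) * pow2 (e - int M)"
      using pow2_shift[of "e - int M" "g - int M"] True by (simp add: n(1))
    then have d: "f - y = of_int (n * 2 ^ nat (g - e) - m) * pow2 (e - int M)"
      using c by (simp add: canonical_rep_def algebra_simps)
    have "pow2 (e - int M) \<le> of_int (n * 2 ^ nat (g - e) - m) * pow2 (e - int M)"
      by (rule int_multiple_ge) (use d assms(4) in simp_all)
    then show ?thesis
      using d by linarith
  next
    case False
    then have "pow2 e \<le> y"
      using canonical_rep_abs_ge[OF c] n(3) assms(2) by auto
    moreover have "\<bar>f\<bar> < pow2 (g + 1)"
      using abs_mantissa_less[OF n(2)] n(1) by simp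
    moreover have "pow2 (g + 1) \<le> pow2 e"
      using False by simp
    ultimately show ?thesis
      using assms(4) by linarith
  qed
qed

lemma
  assumes "x < Omega E M"
  shows fsucc_fl: "fsucc E M x \<in> fl E M"
    and less_fsucc: "x < fsucc E M x"
    and fsucc_le: "y \<in> fl E M \<Longrightarrow> x < y \<Longrightarrow> fsucc E M x \<le> y"
proof -
  have fin: "finite {y \<in> fl E M. x < y}"
    using fl_finite by simp
  have "Min {y \<in> fl E M. x < y} \<in> {y \<in> fl E M. x < y}"
    using assms Omega_fl fin by (intro Min_in) auto
  then show "fsucc E M x \<in> fl E M" "x < fsucc E M x"
    by (auto simp: fsucc_def)
  show "y \<in> fl E M \<Longrightarrow> x < y \<Longrightarrow> fsucc E M x \<le> y"
    using fin by (simp add: fsucc_def)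
qed

lemma le_of_less_fsucc: "x < Omega E M \<Longrightarrow> y \<in> fl E M \<Longrightarrow> y < fsucc E M x \<Longrightarrow> y \<le> x"
  using fsucc_le by force

lemma canonical_rep_add_ulp_fl:
  assumes c: "canonical_rep y m e" and "y < Omega E M"
  shows "y + pow2 (e - int M) \<in> fl E M"
proof -
  have rep: "y + pow2 (e - int M) = of_int (m + 1) * pow2 (e - int M)"
    using c by (simp add: canonical_rep_def algebra_simps)
  show ?thesis
  proof (cases "m < 0")
    case True
    then show ?thesis
      unfolding rep using c by (intro fl_intro) (auto simp: canonical_rep_def)
  next
    case False
    then have "0 \<le> y"
      using c by (simp add: canonical_rep_def)
    then have "\<bar>of_int (m + 1) * pow2 (e - int M)\<bar> \<le> Omega E M"
      using fl_ge_add_ulp[OF c _ Omega_fl assms(2)] unfolding rep[symmetric] by simp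
    then show ?thesis
      unfolding rep using c False by (intro fl_intro_range) (auto simp: canonical_rep_def)
  qed
qed

lemma fsucc_eq_add_ulp:
  assumes c: "canonical_rep y m e" and "0 \<le> y" "y < Omega E M"
  shows "fsucc E M y = y + pow2 (e - int M)"
proof (rule antisym)
  show "fsucc E M y \<le> y + pow2 (e - int M)"
    using fsucc_le[OF assms(3) canonical_rep_add_ulp_fl[OF c assms(3)]] by simp
  show "y + pow2 (e - int M) \<le> fsucc E M y"
    using fl_ge_add_ulp[OF c assms(2) fsucc_fl[OF assms(3)] less_fsucc[OF assms(3)]] .
qed

lemma fsucc_minus_fsucc:
  assumes "x \<in> fl E M" "x < Omega E M"
  shows "fsucc E M (- fsucc E M x) = - x"
proof -
  let ?s = "fsucc E M x"
  have s: "?s \<in> fl E M" "x < ?s"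
    using fsucc_fl[OF assms(2)] less_fsucc[OF assms(2)] .
  have "- ?s < Omega E M"
    using s(2) fl_abs_le_Omega[OF assms(1)] by linarith
  note t = fsucc_fl[OF this] less_fsucc[OF this] fsucc_le[OF this]
  have "fsucc E M (- ?s) \<le> - x"
    using t(3) fl_minus[OF assms(1)] s(2) by simp
  moreover have "\<not> fsucc E M (- ?s) < - x"
  proof
    assume "fsucc E M (- ?s) < - x"
    then have "- fsucc E M (- ?s) \<le> x"
      using le_of_less_fsucc[OF assms(2) fl_minus[OF t(1)]] t(2) by simp
    then show False
      using \<open>fsucc E M (- ?s) < - x\<close> by linarith
  qed
  ultimately show ?thesis
    by simp
qed

lemma canonical_rep_scale_fl:
  assumes c: "canonical_rep x m e" and "emin E \<le> e + k" "\<bar>x\<bar> * pow2 k \<le> Omega E M"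
  shows "x * pow2 k \<in> fl E M"
proof -
  have eq: "x * pow2 k = of_int m * pow2 ((e + k) - int M)"
    using c pow2_add[of "e - int M" k] by (simp add: canonical_rep_def algebra_simps)
  show ?thesis
    unfolding eq using c assms(2,3)
    by (intro fl_intro_range) (auto simp: canonical_rep_def eq[symmetric] abs_mult)
qed

lemma fl_mult_pow2_between:
  assumes c0: "canonical_rep x0 m0 e" and "0 \<le> x0" "x \<in> fl E M" "x0 \<le> x" "x \<le> 1"
    and "emin E \<le> e + k" "k \<le> emax E"
  shows "x * pow2 k \<in> fl E M"
proof -
  obtain m e' where c: "canonical_rep x m e'"
    using assms(3) by (rule canonical_rep_exists)
  have "e \<le> e'"
    using canonical_rep_exp_mono[OF c0 c] assms(2,4) by simp
  moreover have "\<bar>x\<bar> * pow2 k \<le> 1 * pow2 (emax E)"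
    using assms(2,4,5,7) by (intro mult_mono) auto
  ultimately show ?thesis
    using canonical_rep_scale_fl[OF c, of k] assms(6) Omega_ge_pow2_emax[of E M] by simp
qed

section \<open>Rounding to nearest, ties to even\<close>

lemma fl_evenE:
  assumes "fl_even E M y"
  obtains m e where "y = of_int m * pow2 (e - int M)" "even m" "\<bar>m\<bar> < 2 ^ (M + 1)"
    "emin E \<le> e" "e \<le> emax E"
  using assms that by (auto simp: fl_even_def pow2_def)

lemma canonical_rep_fl_even: "canonical_rep y m e \<Longrightarrow> even m \<Longrightarrow> fl_even E M y"
  unfolding canonical_rep_def fl_even_def pow2_def by blast

lemma even_mantissa_neighbours:
  assumes "even m" "\<bar>m\<bar> < (2::int) ^ (M + 1)"
  shows "\<bar>m + 1\<bar> < 2 ^ (M + 1)" "\<bar>m - 1\<bar> < 2 ^ (M + 1)"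
proof -
  obtain t where t: "m = 2 * t"
    using assms(1) by (elim evenE)
  have "\<bar>t\<bar> < 2 ^ M"
    using assms(2) by (simp add: t abs_mult)
  then show "\<bar>m + 1\<bar> < 2 ^ (M + 1)" "\<bar>m - 1\<bar> < 2 ^ (M + 1)"
    unfolding t by (simp_all add: abs_less_iff)
qed

definition adjacent :: "real \<Rightarrow> real \<Rightarrow> bool" where
  "adjacent y1 y2 \<longleftrightarrow> y1 < y2 \<and> (\<forall>f \<in> fl E M. \<not> (y1 < f \<and> f < y2))"

lemma adjacent_minus: "adjacent y1 y2 \<Longrightarrow> adjacent (- y2) (- y1)"
  unfolding adjacent_def by (metis fl_minus minus_minus neg_less_iff_less)

text \<open>The gap \<open>y2 - y1\<close> is at most one unit in the last place of either representation, yet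
  an even multiple of the finer of the two units.\<close>
lemma adjacent_not_both_even:
  assumes "adjacent y1 y2" "fl_even E M y1" "fl_even E M y2"
  shows False
proof -
  obtain m1 e1 where r1: "y1 = of_int m1 * pow2 (e1 - int M)" "even m1" "\<bar>m1\<bar> < 2 ^ (M + 1)"
    "emin E \<le> e1" "e1 \<le> emax E"
    using assms(2) by (rule fl_evenE)
  obtain m2 e2 where r2: "y2 = of_int m2 * pow2 (e2 - int M)" "even m2" "\<bar>m2\<bar> < 2 ^ (M + 1)"
    "emin E \<le> e2" "e2 \<le> emax E"
    using assms(3) by (rule fl_evenE)
  have "of_int (m1 + 1) * pow2 (e1 - int M) \<in> fl E M"
    using even_mantissa_neighbours[OF r1(2,3)] r1 by (intro fl_intro) auto
  then have le1: "y2 \<le> y1 + pow2 (e1 - int M)"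
    using assms(1) r1(1) unfolding adjacent_def by (force simp: algebra_simps)
  have "of_int (m2 - 1) * pow2 (e2 - int M) \<in> fl E M"
    using even_mantissa_neighbours[OF r2(2,3)] r2 by (intro fl_intro) auto
  then have le2: "y2 - pow2 (e2 - int M) \<le> y1"
    using assms(1) r2(1) unfolding adjacent_def by (force simp: algebra_simps)
  have lt: "y1 < y2"
    using assms(1) by (simp add: adjacent_def)
  show False
  proof (cases "e1 \<le> e2")
    case True
    define n where "n = m2 * 2 ^ nat (e2 - e1) - m1"
    have "y2 - y1 = of_int n * pow2 (e1 - int M)"
      using pow2_shift[of "e1 - int M" "e2 - int M"] True r1(1) r2(1)
      by (simp add: n_def algebra_simps)
    then have "n = 1"
      using le1 lt
      by (intro int_multiple_le_eq_1[of "pow2 (e1 - int M)"]) (simp, linarith, linarith)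
    moreover have "even n"
      using r1(2) r2(2) by (simp add: n_def)
    ultimately show False
      by simp
  next
    case False
    define n where "n = m2 - m1 * 2 ^ nat (e1 - e2)"
    have "y2 - y1 = of_int n * pow2 (e2 - int M)"
      using pow2_shift[of "e2 - int M" "e1 - int M"] False r1(1) r2(1)
      by (simp add: n_def algebra_simps)
    then have "n = 1"
      using le2 lt
      by (intro int_multiple_le_eq_1[of "pow2 (e2 - int M)"]) (simp, linarith, linarith)
    moreover have "even n"
      using r1(2) r2(2) by (simp add: n_def)
    ultimately show False
      by simp
  qed
qed

text \<open>If \<open>e1 \<le> e2\<close>, adjacency forces \<open>y2 = y1 + 2 powr (e1 - M)\<close>, i.e.
  \<open>m2 * 2 ^ (e2 - e1) = m1 + 1\<close>: for \<open>e1 = e2\<close> this contradicts the parities, and for \<open>e1 < e2\<close>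
  it forces the normal mantissa \<open>m2\<close> to be \<open>\<plusminus>2 ^ M\<close>, which is even.\<close>
lemma adjacent_odd_canonical_exp_gt:
  assumes c1: "canonical_rep y1 m1 e1" and c2: "canonical_rep y2 m2 e2"
    and "adjacent y1 y2" "odd m1" "odd m2"
  shows "e2 < e1"
proof (rule ccontr)
  assume "\<not> e2 < e1"
  then have le: "e1 \<le> e2"
    by simp
  have r1: "y1 = of_int m1 * pow2 (e1 - int M)" "\<bar>m1\<bar> < 2 ^ (M + 1)" "emin E \<le> e1"
    using c1 by (auto simp: canonical_rep_def)
  have r2: "y2 = of_int m2 * pow2 (e2 - int M)"
    using c2 by (simp add: canonical_rep_def)
  have lt: "y1 < y2"
    using assms(3) by (simp add: adjacent_def)
  then have "y1 < Omega E M"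
    using fl_abs_le_Omega[OF canonical_rep_fl[OF c2]] by simp
  then have gap: "y2 \<le> y1 + pow2 (e1 - int M)"
    using canonical_rep_add_ulp_fl[OF c1] assms(3) unfolding adjacent_def by force
  define j where "j = nat (e2 - e1)"
  have "y2 - y1 = of_int (m2 * 2 ^ j - m1) * pow2 (e1 - int M)"
    using pow2_shift[of "e1 - int M" "e2 - int M"] le r1(1) r2 by (simp add: j_def algebra_simps)
  then have "m2 * 2 ^ j - m1 = 1"
    using gap lt by (intro int_multiple_le_eq_1[of "pow2 (e1 - int M)"]) (simp, linarith, linarith)
  then have eq: "m2 * 2 ^ j = m1 + 1"
    by simp
  show False
  proof (cases "j = 0")
    case True
    then show False
      using eq assms(4,5) by simp
  next
    case False
    then have "e2 \<noteq> emin E"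
      using r1(3) j_def by simp
    then have "2 ^ M \<le> \<bar>m2\<bar>"
      using c2 by (simp add: canonical_rep_def)
    moreover have "\<bar>m2\<bar> * 2 \<le> \<bar>m2\<bar> * 2 ^ j"
      using self_le_power[of 2 j] False by (intro mult_left_mono) simp_all
    moreover have "\<bar>m2\<bar> * 2 ^ j = \<bar>m1 + 1\<bar>"
      using eq by (metis abs_mult abs_of_nonneg zero_le_power zero_le_numeral)
    moreover have "\<bar>m1 + 1\<bar> \<le> 2 ^ (M + 1)"
      using r1(2) by simp
    ultimately have "\<bar>m2\<bar> = 2 ^ M"
      by simp
    then have "even \<bar>m2\<bar>"
      using mantissa_bits by simp
    then show False
      using assms(5) by simp
  qed
qed

lemma adjacent_even:
  assumes "y1 \<in> fl E M" "y2 \<in> fl E M" "adjacent y1 y2"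
  shows "fl_even E M y1 \<or> fl_even E M y2"
proof -
  obtain m1 e1 where c1: "canonical_rep y1 m1 e1"
    using assms(1) by (rule canonical_rep_exists)
  obtain m2 e2 where c2: "canonical_rep y2 m2 e2"
    using assms(2) by (rule canonical_rep_exists)
  show ?thesis
  proof (cases "even m1 \<or> even m2")
    case True
    then show ?thesis
      using canonical_rep_fl_even c1 c2 by blast
  next
    case False
    then have "e2 < e1" "e1 < e2"
      using adjacent_odd_canonical_exp_gt[OF c1 c2 assms(3)]
        adjacent_odd_canonical_exp_gt[OF canonical_rep_minus[OF c2] canonical_rep_minus[OF c1]
          adjacent_minus[OF assms(3)]]
      by auto
    then show ?thesis
      by simp
  qed
qed

definition nearest :: "real \<Rightarrow> real \<Rightarrow> bool" where
  "nearest x y \<longleftrightarrow> y \<in> fl E M \<and> (\<forall>f \<in> fl E M. \<bar>x - y\<bar> \<le> \<bar>x - f\<bar>)"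

lemma nearest_exists: obtains y where "nearest x y"
proof -
  let ?D = "(\<lambda>f. \<bar>x - f\<bar>) ` fl E M"
  have "finite ?D" "?D \<noteq> {}"
    using fl_finite fl_zero by auto
  then have "Min ?D \<in> ?D" "\<forall>d \<in> ?D. Min ?D \<le> d"
    by simp_all
  then show ?thesis
    using that unfolding nearest_def by force
qed

lemma nearest_tie:
  assumes "nearest x y1" "nearest x y2" "y1 < y2"
  shows "adjacent y1 y2" and "nearest x y \<Longrightarrow> y = y1 \<or> y = y2"
proof -
  have dist: "\<bar>x - y1\<bar> = \<bar>x - y2\<bar>"
    using assms(1,2) unfolding nearest_def by force
  then have mid: "x = (y1 + y2) / 2"
    using assms(3) by (auto simp: abs_if split: if_splits)
  show "adjacent y1 y2"
    unfolding adjacent_def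
  proof (intro conjI ballI notI)
    fix f
    assume "f \<in> fl E M" "y1 < f \<and> f < y2"
    then have "\<bar>x - f\<bar> < \<bar>x - y1\<bar>"
      using mid by (auto simp: abs_if)
    then show False
      using assms(1) \<open>f \<in> fl E M\<close> unfolding nearest_def by force
  qed (rule assms(3))
  assume "nearest x y"
  then have "\<bar>x - y\<bar> = \<bar>x - y1\<bar>"
    using assms(1) unfolding nearest_def by force
  then show "y = y1 \<or> y = y2"
    using mid assms(3) by (auto simp: abs_if split: if_splits; linarith)
qed

lemma nearest_dist_eq: "nearest x y \<Longrightarrow> nearest x y' \<Longrightarrow> \<bar>x - y\<bar> = \<bar>x - y'\<bar>"
  unfolding nearest_def by force

definition nearest_even :: "real \<Rightarrow> real \<Rightarrow> bool" where
  "nearest_even x y \<longleftrightarrow> nearest x y \<and>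
    ((\<forall>z \<in> fl E M. \<bar>x - z\<bar> = \<bar>x - y\<bar> \<longrightarrow> z = y) \<or> fl_even E M y)"

lemma rnd_eq_nearest_even:
  "\<bar>x\<bar> < overflow_threshold \<Longrightarrow> rnd E M x = Fin (THE y. nearest_even x y)"
  unfolding rnd_def nearest_even_def nearest_def by (simp add: abs_less_iff)

lemma nearest_even_unique_tie:
  assumes "nearest x y1" "nearest x y2" "y1 < y2"
  shows "\<exists>!y. nearest_even x y"
proof -
  note tie = nearest_tie[OF assms]
  obtain ye where ye: "ye = y1 \<or> ye = y2" "fl_even E M ye"
    using adjacent_even[OF _ _ tie(1)] assms unfolding nearest_def by blast
  have ye_nearest: "nearest x ye"
    using ye(1) assms by blast
  show ?thesis
  proof (rule ex1I[of _ ye])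
    show "nearest_even x ye"
      using ye(2) ye_nearest unfolding nearest_even_def by blast
    fix y
    assume y_even: "nearest_even x y"
    then have y: "nearest x y" "y = y1 \<or> y = y2"
      using tie(2) unfolding nearest_even_def by auto
    show "y = ye"
    proof (rule ccontr)
      assume "y \<noteq> ye"
      moreover have "ye \<in> fl E M" "\<bar>x - ye\<bar> = \<bar>x - y\<bar>"
        using ye_nearest nearest_dist_eq[OF ye_nearest y(1)] unfolding nearest_def by auto
      ultimately have "fl_even E M y"
        using y_even unfolding nearest_even_def by blast
      then show False
        using adjacent_not_both_even[OF tie(1)] ye y(2) \<open>y \<noteq> ye\<close> by blast
    qed
  qed
qed

lemma nearest_even_unique: "\<exists>!y. nearest_even x y"
proof -
  obtain y0 where y0: "nearest x y0"
    by (rule nearest_exists)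
  show ?thesis
  proof (cases "\<exists>y'. nearest x y' \<and> y' \<noteq> y0")
    case False
    show ?thesis
    proof (rule ex1I[of _ y0])
      have "nearest x z" if "z \<in> fl E M" "\<bar>x - z\<bar> = \<bar>x - y0\<bar>" for z
        using that y0 unfolding nearest_def by simp
      then show "nearest_even x y0"
        using y0 False unfolding nearest_even_def by blast
      show "nearest_even x y \<Longrightarrow> y = y0" for y
        using False unfolding nearest_even_def by blast
    qed
  next
    case True
    then obtain y' where y': "nearest x y'" "y' \<noteq> y0"
      by blast
    show ?thesis
    proof (cases "y0 < y'")
      case True
      then show ?thesis
        using nearest_even_unique_tie[OF y0 y'(1)] by blast
    next
      case False
      then show ?thesis
        using nearest_even_unique_tie[OF y'(1) y0] y'(2) by simp
    qed
  qed
qed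

lemma rnd_nearest:
  assumes "\<bar>x\<bar> < overflow_threshold"
  obtains y where "rnd E M x = Fin y" "nearest x y"
proof -
  have "nearest_even x (THE y. nearest_even x y)"
    using nearest_even_unique by (rule theI')
  then show ?thesis
    using rnd_eq_nearest_even[OF assms] that unfolding nearest_even_def by blast
qed

lemma fl_abs_less_overflow: "x \<in> fl E M \<Longrightarrow> \<bar>x\<bar> < overflow_threshold"
  using fl_abs_le_Omega Omega_less_overflow by (rule order_le_less_trans)

lemma rnd_fl: "x \<in> fl E M \<Longrightarrow> rnd E M x = Fin x"
proof -
  assume x: "x \<in> fl E M"
  then have "\<bar>x\<bar> < overflow_threshold"
    by (rule fl_abs_less_overflow)
  then obtain y where "rnd E M x = Fin y" "nearest x y"
    by (rule rnd_nearest)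
  then show ?thesis
    using x unfolding nearest_def by force
qed

lemma rnd_between_fl:
  assumes "\<bar>x\<bar> < overflow_threshold"
  obtains y where "rnd E M x = Fin y" "y \<in> fl E M"
    "\<And>f. f \<in> fl E M \<Longrightarrow> x \<le> f \<Longrightarrow> y \<le> f" "\<And>f. f \<in> fl E M \<Longrightarrow> f \<le> x \<Longrightarrow> f \<le> y"
proof -
  obtain y where y: "rnd E M x = Fin y" "nearest x y"
    using assms by (rule rnd_nearest)
  show ?thesis
    by (rule that[OF y(1)]) (use y(2) in \<open>force simp: nearest_def abs_if split: if_splits\<close>)+
qed

end

section \<open>Interval semantics of depth-1 networks\<close>

lemma net1_sharp_Fin:
  assumes "fmul E M (Fin x1) (Fin w) = Fin p1" "fmul E M (Fin x2) (Fin w) = Fin p2"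
    "rnd E M (p1 + b) = Fin q1" "rnd E M (p2 + b) = Fin q2"
  shows "net1_sharp E M w b (Itv (Fin x1) (Fin x2)) = Itv (Fin (min q1 q2)) (Fin (max q1 q2))"
  using assms by (cases "p1 \<le> p2"; cases "q1 \<le> q2")
    (auto simp: net1_sharp_def abs_op_def ext_min_def ext_max_def min_def max_def)

lemma gamma_Itv_Fin_subset: "A \<le> lo \<Longrightarrow> hi \<le> B \<Longrightarrow> gamma E M (Itv (Fin lo) (Fin hi)) \<subseteq> Fin ` {A..B}"
proof
  fix x
  assume "A \<le> lo" "hi \<le> B" "x \<in> gamma E M (Itv (Fin lo) (Fin hi))"
  then show "x \<in> Fin ` {A..B}"
    by (cases x) (auto simp: gamma_def)
qed

context float_format
begin

lemma gamma_net1_sharp_subset: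
  assumes "x1 * w \<in> fl E M" "x2 * w \<in> fl E M"
    "rnd E M (x1 * w + b) = Fin q1" "rnd E M (x2 * w + b) = Fin q2"
    "A \<le> q1" "q1 \<le> B" "A \<le> q2" "q2 \<le> B"
  shows "gamma E M (net1_sharp E M w b (Itv (Fin x1) (Fin x2))) \<subseteq> Fin ` {A..B}"
proof -
  have "net1_sharp E M w b (Itv (Fin x1) (Fin x2)) = Itv (Fin (min q1 q2)) (Fin (max q1 q2))"
    by (rule net1_sharp_Fin) (use assms(1-4) rnd_fl in simp_all)
  then show ?thesis
    using assms(5-8) by (simp add: gamma_Itv_Fin_subset)
qed

lemma gamma_net1_sharp_le:
  assumes "x1 * w \<in> fl E M" "x2 * w \<in> fl E M"
    "\<bar>x1 * w + b\<bar> < overflow_threshold" "\<bar>x2 * w + b\<bar> < overflow_threshold"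
    "B \<in> fl E M" "x1 * w + b \<le> B" "x2 * w + b \<le> B"
  shows "gamma E M (net1_sharp E M w b (Itv (Fin x1) (Fin x2))) \<subseteq> Fin ` {- Omega E M .. B}"
proof -
  obtain q1 where q1: "rnd E M (x1 * w + b) = Fin q1" "q1 \<in> fl E M" "q1 \<le> B"
    using assms(3) by (rule rnd_between_fl) (use assms(5,6) in blast)
  obtain q2 where q2: "rnd E M (x2 * w + b) = Fin q2" "q2 \<in> fl E M" "q2 \<le> B"
    using assms(4) by (rule rnd_between_fl) (use assms(5,7) in blast)
  show ?thesis
    by (rule gamma_net1_sharp_subset[OF assms(1,2) q1(1) q2(1)])
      (use q1 q2 fl_abs_le_Omega[OF q1(2)] fl_abs_le_Omega[OF q2(2)] in auto)
qed

lemma gamma_net1_sharp_ge: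
  assumes "x1 * w \<in> fl E M" "x2 * w \<in> fl E M"
    "\<bar>x1 * w + b\<bar> < overflow_threshold" "\<bar>x2 * w + b\<bar> < overflow_threshold"
    "A \<in> fl E M" "A \<le> x1 * w + b" "A \<le> x2 * w + b"
  shows "gamma E M (net1_sharp E M w b (Itv (Fin x1) (Fin x2))) \<subseteq> Fin ` {A .. Omega E M}"
proof -
  obtain q1 where q1: "rnd E M (x1 * w + b) = Fin q1" "q1 \<in> fl E M" "A \<le> q1"
    using assms(3) by (rule rnd_between_fl) (use assms(5,6) in blast)
  obtain q2 where q2: "rnd E M (x2 * w + b) = Fin q2" "q2 \<in> fl E M" "A \<le> q2"
    using assms(4) by (rule rnd_between_fl) (use assms(5,7) in blast)
  show ?thesis
    by (rule gamma_net1_sharp_subset[OF assms(1,2) q1(1) q2(1)])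
      (use q1 q2 fl_abs_le_Omega[OF q1(2)] fl_abs_le_Omega[OF q2(2)] in auto)
qed

lemma affine_abs_less_overflow:
  assumes "\<bar>x\<bar> \<le> 1" "\<bar>w\<bar> \<le> pow2 (emax E)" "\<bar>b\<bar> < 4"
  shows "\<bar>x * w + b\<bar> < overflow_threshold"
proof -
  have "\<bar>x * w\<bar> \<le> 1 * pow2 (emax E)"
    unfolding abs_mult using assms(1,2) by (intro mult_mono) auto
  then show ?thesis
    using assms(3) pow2_emax_add_4_less_overflow by linarith
qed

lemma gamma_net1_sharp_separates_increasing:
  assumes "- 1 \<le> z" "z < z'" "z' \<le> 1" "\<bar>w\<bar> \<le> pow2 (emax E)" "\<bar>b\<bar> < 4"
    and fl_products: "\<And>x. x \<in> {- 1, z, z', 1} \<Longrightarrow> x * w \<in> fl E M"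
    and "t \<in> fl E M" "t' \<in> fl E M" "t < t'" "z * w + b \<le> t" "t' \<le> z' * w + b"
  shows "gamma E M (net1_sharp E M w b (Itv (Fin (- 1)) (Fin z))) \<subseteq> Fin ` {- Omega E M .. t}"
    and "gamma E M (net1_sharp E M w b (Itv (Fin z') (Fin 1))) \<subseteq> Fin ` {t' .. Omega E M}"
proof -
  have "0 < (z' - z) * w"
    using assms(9-11) by (simp add: algebra_simps)
  then have "0 < w"
    using assms(2) by (simp add: zero_less_mult_iff)
  have overflow: "\<bar>x * w + b\<bar> < overflow_threshold" if "x \<in> {- 1, z, z', 1}" for x
    using that assms(1-5) by (intro affine_abs_less_overflow) auto
  have mono: "- 1 * w \<le> z * w" "z' * w \<le> 1 * w"
    using mult_right_mono[OF assms(1), of w] mult_right_mono[OF assms(3), of w] \<open>0 < w\<close> by simp_all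
  show "gamma E M (net1_sharp E M w b (Itv (Fin (- 1)) (Fin z))) \<subseteq> Fin ` {- Omega E M .. t}"
    by (rule gamma_net1_sharp_le)
      (use mono assms(7,10) fl_products[of "- 1"] fl_products[of z] overflow[of "- 1"] overflow[of z]
        in auto)
  show "gamma E M (net1_sharp E M w b (Itv (Fin z') (Fin 1))) \<subseteq> Fin ` {t' .. Omega E M}"
    by (rule gamma_net1_sharp_ge)
      (use mono assms(8,11) fl_products[of z'] fl_products[of 1] overflow[of z'] overflow[of 1] in auto)
qed

lemma gamma_net1_sharp_separates_decreasing:
  assumes "- 1 \<le> z" "z < z'" "z' \<le> 1" "\<bar>w\<bar> \<le> pow2 (emax E)" "\<bar>b\<bar> < 4"
    and fl_products: "\<And>x. x \<in> {- 1, z, z', 1} \<Longrightarrow> x * w \<in> fl E M"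
    and "t \<in> fl E M" "t' \<in> fl E M" "t < t'" "t' \<le> z * w + b" "z' * w + b \<le> t"
  shows "gamma E M (net1_sharp E M w b (Itv (Fin (- 1)) (Fin z))) \<subseteq> Fin ` {t' .. Omega E M}"
    and "gamma E M (net1_sharp E M w b (Itv (Fin z') (Fin 1))) \<subseteq> Fin ` {- Omega E M .. t}"
proof -
  have "0 < (z' - z) * (- w)"
    using assms(9-11) by (simp add: algebra_simps)
  then have "w < 0"
    using assms(2) by (simp add: mult_less_0_iff)
  have overflow: "\<bar>x * w + b\<bar> < overflow_threshold" if "x \<in> {- 1, z, z', 1}" for x
    using that assms(1-5) by (intro affine_abs_less_overflow) auto
  have mono: "z * w \<le> - 1 * w" "1 * w \<le> z' * w"
    using mult_right_mono_neg[OF assms(1), of w] mult_right_mono_neg[OF assms(3), of w] \<open>w < 0\<close>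
    by simp_all
  show "gamma E M (net1_sharp E M w b (Itv (Fin (- 1)) (Fin z))) \<subseteq> Fin ` {t' .. Omega E M}"
    by (rule gamma_net1_sharp_ge)
      (use mono assms(8,10) fl_products[of "- 1"] fl_products[of z] overflow[of "- 1"] overflow[of z]
        in auto)
  show "gamma E M (net1_sharp E M w b (Itv (Fin z') (Fin 1))) \<subseteq> Fin ` {- Omega E M .. t}"
    by (rule gamma_net1_sharp_le)
      (use mono assms(7,11) fl_products[of z'] fl_products[of 1] overflow[of z'] overflow[of 1] in auto)
qed

section \<open>Separating depth-1 networks\<close>

lemma pow2_weight_anchor:
  assumes "x0 \<in> fl E M" "x1 \<in> fl E M" "0 \<le> x0" "x0 < x1" "x1 \<le> 1"
    and "y0 \<in> fl E M" "0 \<le> y0" "y0 < 4"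
  obtains W b where "W \<in> fl E M" "0 < W" "W \<le> pow2 (emax E)" "b \<in> fl E M" "\<bar>b\<bar> < 4"
    "x0 * W + b = y0" "fsucc E M y0 \<le> x1 * W + b"
    "\<And>x. x \<in> fl E M \<Longrightarrow> x0 \<le> x \<Longrightarrow> x \<le> 1 \<Longrightarrow> x * W \<in> fl E M"
proof -
  obtain mx e where cx: "canonical_rep x0 mx e"
    using assms(1) by (rule canonical_rep_exists)
  obtain my q where cy: "canonical_rep y0 my q"
    using assms(6) by (rule canonical_rep_exists)
  have "e < 0"
    using canonical_rep_exp_less[OF cx, of 0] assms(3-5) emin_neg by simp
  moreover have "q < 2"
    using canonical_rep_exp_less[OF cy, of 2] assms(7,8) emin_neg by simp
  ultimately have k: "emin E \<le> q - e" "q - e \<le> emax E"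
    using cx cy emin_eq by (auto simp: canonical_rep_def)
  define W where "W = pow2 (q - e)"
  have W: "W \<in> fl E M" "0 < W" "W \<le> pow2 (emax E)"
    using pow2_fl[OF k] k by (simp_all add: W_def)
  have scaled: "x * W \<in> fl E M" if "x \<in> fl E M" "x0 \<le> x" "x \<le> 1" for x
    unfolding W_def using fl_mult_pow2_between[OF cx assms(3) that] k cy
    by (simp add: canonical_rep_def)
  have mx: "0 \<le> mx" "\<bar>mx\<bar> < 2 ^ (M + 1)" and my: "0 \<le> my" "\<bar>my\<bar> < 2 ^ (M + 1)"
    using cx cy assms(3,7) by (auto simp: canonical_rep_def zero_le_mult_iff)
  have x0W: "x0 * W = of_int mx * pow2 (q - int M)"
    using cx pow2_add[of "e - int M" "q - e"] by (simp add: canonical_rep_def W_def)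
  define b where "b = y0 - x0 * W"
  have b_rep: "b = of_int (my - mx) * pow2 (q - int M)"
    unfolding b_def x0W using cy by (simp add: canonical_rep_def algebra_simps)
  have mantissa: "\<bar>my - mx\<bar> < 2 ^ (M + 1)"
    using mx my by (simp add: abs_less_iff)
  have "b \<in> fl E M"
    unfolding b_rep using mantissa cy by (intro fl_intro) (auto simp: canonical_rep_def)
  moreover have "\<bar>b\<bar> < 4"
    using abs_mantissa_less[OF mantissa, of q] pow2_le_iff[of "q + 1" 2] \<open>q < 2\<close>
    unfolding b_rep by simp
  moreover have "fsucc E M y0 \<le> x1 * W + b"
  proof -
    have "(x0 + pow2 (e - int M)) * W \<le> x1 * W"
      using fl_ge_add_ulp[OF cx assms(3,2,4)] W(2) by simp
    moreover have "pow2 (e - int M) * W = pow2 (q - int M)"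
      using pow2_add[of "e - int M" "q - e"] by (simp add: W_def)
    moreover have "fsucc E M y0 = y0 + pow2 (q - int M)"
      using fsucc_eq_add_ulp[OF cy assms(7)] assms(8) Omega_gt_4 by simp
    ultimately show ?thesis
      by (simp add: b_def algebra_simps)
  qed
  ultimately show ?thesis
    by (intro that[of W b] W scaled) (simp_all add: b_def)
qed

lemma pow2_weight_anchor_signed:
  assumes "z \<in> fl E M" "- 1 \<le> z" "z < 1" "y0 \<in> fl E M" "0 \<le> y0" "y0 < 4"
  obtains w b where "w \<in> fl E M" "\<bar>w\<bar> \<le> pow2 (emax E)" "b \<in> fl E M" "\<bar>b\<bar> < 4"
    "\<And>x. x \<in> {- 1, z, fsucc E M z, 1} \<Longrightarrow> x * w \<in> fl E M"
    "(z * w + b = y0 \<and> fsucc E M y0 \<le> fsucc E M z * w + b) \<or>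
     (fsucc E M z * w + b = y0 \<and> fsucc E M y0 \<le> z * w + b)"
proof -
  let ?z' = "fsucc E M z"
  have "z < Omega E M"
    using assms(3) Omega_gt_4 by simp
  note z' = fsucc_fl[OF this] less_fsucc[OF this] fsucc_le[OF this]
  show ?thesis
  proof (cases "0 \<le> z")
    case True
    have "?z' \<le> 1"
      using z'(3)[OF one_fl] assms(3) .
    then obtain W b where W: "W \<in> fl E M" "0 < W" "W \<le> pow2 (emax E)" "b \<in> fl E M" "\<bar>b\<bar> < 4"
      "z * W + b = y0" "fsucc E M y0 \<le> ?z' * W + b"
      and scaled: "\<And>x. x \<in> fl E M \<Longrightarrow> z \<le> x \<Longrightarrow> x \<le> 1 \<Longrightarrow> x * W \<in> fl E M"
      using pow2_weight_anchor[OF assms(1) z'(1) True z'(2) _ assms(4-6)] by blast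
    have "x * W \<in> fl E M" if "x \<in> {- 1, z, ?z', 1}" for x
      using that scaled[of z] scaled[of ?z'] scaled[of 1] fl_minus[OF scaled[of 1]]
        assms(1,3) z' \<open>?z' \<le> 1\<close> one_fl
      by auto
    then show ?thesis
      using that[of W b] W by simp
  next
    case False
    have "?z' \<le> 0"
      using z'(3)[OF fl_zero] False by simp
    then obtain W b where W: "W \<in> fl E M" "0 < W" "W \<le> pow2 (emax E)" "b \<in> fl E M" "\<bar>b\<bar> < 4"
      "- ?z' * W + b = y0" "fsucc E M y0 \<le> - z * W + b"
      and scaled: "\<And>x. x \<in> fl E M \<Longrightarrow> - ?z' \<le> x \<Longrightarrow> x \<le> 1 \<Longrightarrow> x * W \<in> fl E M"
      using pow2_weight_anchor[OF fl_minus[OF z'(1)] fl_minus[OF assms(1)] _ _ _ assms(4-6)]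
        z'(2) assms(2)
      by auto
    have "x * - W \<in> fl E M" if "x \<in> {- 1, z, ?z', 1}" for x
      using that scaled[of "- z"] scaled[of "- ?z'"] scaled[of 1] fl_minus[OF scaled[of 1]]
        fl_minus[OF assms(1)] fl_minus[OF z'(1)] assms(2) z'(2) \<open>?z' \<le> 0\<close> one_fl
      by auto
    then show ?thesis
      using that[of "- W" b] W fl_minus[OF W(1)] by simp
  qed
qed

lemma separating_affine_map:
  assumes "z \<in> fl E M" "- 1 \<le> z" "z < 1" "\<eta> \<in> fl E M" "\<eta> \<noteq> 0" "\<bar>\<eta>\<bar> < 4"
  obtains w b where "w \<in> fl E M" "\<bar>w\<bar> \<le> pow2 (emax E)" "b \<in> fl E M" "\<bar>b\<bar> < 4"
    "\<And>x. x \<in> {- 1, z, fsucc E M z, 1} \<Longrightarrow> x * w \<in> fl E M"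
    "(z * w + b \<le> \<eta> \<and> fsucc E M \<eta> \<le> fsucc E M z * w + b) \<or>
     (fsucc E M \<eta> \<le> z * w + b \<and> fsucc E M z * w + b \<le> \<eta>)"
proof (cases "0 < \<eta>")
  case True
  obtain w b where wb: "w \<in> fl E M" "\<bar>w\<bar> \<le> pow2 (emax E)" "b \<in> fl E M" "\<bar>b\<bar> < 4"
    "\<And>x. x \<in> {- 1, z, fsucc E M z, 1} \<Longrightarrow> x * w \<in> fl E M"
    "(z * w + b = \<eta> \<and> fsucc E M \<eta> \<le> fsucc E M z * w + b) \<or>
     (fsucc E M z * w + b = \<eta> \<and> fsucc E M \<eta> \<le> z * w + b)"
    using pow2_weight_anchor_signed[OF assms(1-4)] True assms(6) by auto
  show ?thesis
    by (rule that[OF wb(1-5)]) (use wb(6) in auto)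
next
  case False
  then have "\<eta> < 0"
    using assms(5) by simp
  have "\<eta> < Omega E M"
    using assms(6) Omega_gt_4 by simp
  have \<eta>': "fsucc E M \<eta> \<in> fl E M" "0 \<le> - fsucc E M \<eta>" "- fsucc E M \<eta> < 4"
    using fsucc_fl[OF \<open>\<eta> < Omega E M\<close>] fsucc_le[OF \<open>\<eta> < Omega E M\<close> fl_zero \<open>\<eta> < 0\<close>]
      less_fsucc[OF \<open>\<eta> < Omega E M\<close>] assms(6)
    by simp_all
  obtain w b where wb: "w \<in> fl E M" "\<bar>w\<bar> \<le> pow2 (emax E)" "b \<in> fl E M" "\<bar>b\<bar> < 4"
    "\<And>x. x \<in> {- 1, z, fsucc E M z, 1} \<Longrightarrow> x * w \<in> fl E M"
    "(z * w + b = - fsucc E M \<eta> \<and> fsucc E M (- fsucc E M \<eta>) \<le> fsucc E M z * w + b) \<or>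
     (fsucc E M z * w + b = - fsucc E M \<eta> \<and> fsucc E M (- fsucc E M \<eta>) \<le> z * w + b)"
    using pow2_weight_anchor_signed[OF assms(1-3) fl_minus[OF \<eta>'(1)] \<eta>'(2,3)] by blast
  have products: "x * - w \<in> fl E M" if "x \<in> {- 1, z, fsucc E M z, 1}" for x
    using fl_minus[OF wb(5)[OF that]] by simp
  show ?thesis
    by (rule that[of "- w" "- b", OF fl_minus[OF wb(1)] _ fl_minus[OF wb(3)] _ products])
      (use wb(2,4,6) fsucc_minus_fsucc[OF assms(4) \<open>\<eta> < Omega E M\<close>] in auto)
qed

lemma gamma_net1_sharp_const:
  "\<eta> \<in> fl E M \<Longrightarrow> gamma E M (net1_sharp E M 0 \<eta> (Itv (Fin x1) (Fin x2))) \<subseteq> Fin ` {- Omega E M .. \<eta>}"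
  using fl_zero fl_abs_less_overflow[of \<eta>] by (intro gamma_net1_sharp_le) auto

theorem depth1_network_separates:
  assumes "\<eta> \<in> fl E M" "\<eta> \<noteq> 0" "\<bar>\<eta>\<bar> < 4" and "z \<in> fl E M" "\<bar>z\<bar> \<le> fsucc E M 1"
  shows "\<exists>w b. w \<in> fl E M \<and> b \<in> fl E M \<and>
    ((( -1 \<le> z \<longrightarrow> gamma E M (net1_sharp E M w b (Itv (Fin (-1)) (Fin z)))
                        \<subseteq> Fin ` {- Omega E M .. \<eta>}) \<and>
      (fsucc E M z \<le> 1 \<longrightarrow> gamma E M (net1_sharp E M w b (Itv (Fin (fsucc E M z)) (Fin 1)))
                        \<subseteq> Fin ` {fsucc E M \<eta> .. Omega E M})) \<or>
     (( -1 \<le> z \<longrightarrow> gamma E M (net1_sharp E M w b (Itv (Fin (-1)) (Fin z)))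
                        \<subseteq> Fin ` {fsucc E M \<eta> .. Omega E M}) \<and>
      (fsucc E M z \<le> 1 \<longrightarrow> gamma E M (net1_sharp E M w b (Itv (Fin (fsucc E M z)) (Fin 1)))
                        \<subseteq> Fin ` {- Omega E M .. \<eta>})))"
proof -
  consider "z < - 1" | "1 \<le> z" | "- 1 \<le> z" "z < 1"
    by linarith
  then show ?thesis
  proof cases
    case 1
    then show ?thesis
      using gamma_net1_sharp_const[OF assms(1)] fl_zero assms(1)
      by (intro exI[of _ 0] exI[of _ \<eta>]) auto
  next
    case 2
    have "fsucc E M 1 \<le> 2"
      using fsucc_le[OF _ two_fl] Omega_gt_4 by simp
    then have "z < Omega E M"
      using assms(5) Omega_gt_4 by simp
    then have "\<not> fsucc E M z \<le> 1"
      using less_fsucc[of z] 2 by simp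
    then show ?thesis
      using gamma_net1_sharp_const[OF assms(1)] fl_zero assms(1)
      by (intro exI[of _ 0] exI[of _ \<eta>]) auto
  next
    case 3
    have z: "z < fsucc E M z" "fsucc E M z \<le> 1"
      using less_fsucc fsucc_le[OF _ one_fl] 3 Omega_gt_4 by simp_all
    have \<eta>: "fsucc E M \<eta> \<in> fl E M" "\<eta> < fsucc E M \<eta>"
      using fsucc_fl less_fsucc assms(3) Omega_gt_4 by simp_all
    obtain w b where wb: "w \<in> fl E M" "\<bar>w\<bar> \<le> pow2 (emax E)" "b \<in> fl E M" "\<bar>b\<bar> < 4"
      "\<And>x. x \<in> {- 1, z, fsucc E M z, 1} \<Longrightarrow> x * w \<in> fl E M"
      "(z * w + b \<le> \<eta> \<and> fsucc E M \<eta> \<le> fsucc E M z * w + b) \<or>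
       (fsucc E M \<eta> \<le> z * w + b \<and> fsucc E M z * w + b \<le> \<eta>)"
      using separating_affine_map[OF assms(4) 3 assms(1-3)] by blast
    note separates = gamma_net1_sharp_separates_increasing[OF 3(1) z wb(2,4,5) assms(1) \<eta>]
      gamma_net1_sharp_separates_decreasing[OF 3(1) z wb(2,4,5) assms(1) \<eta>]
    from wb(6) show ?thesis
      using separates wb(1,3) by blast
  qed
qed

end

theorem lemma6:
  fixes E M :: nat and \<sigma> :: "ext \<Rightarrow> ext" and c1 c2 \<eta> z :: real
  assumes "E \<ge> 5" and "3 \<le> M" and "M \<le> 2 ^ (E - 1)"
    and "c1 \<in> fl E M" and "c2 \<in> fl E M" and "\<eta> \<in> fl E M"
    and "cond1 E M \<sigma> c1 c2 \<eta>"
    and "z \<in> fl E M" and "\<bar>z\<bar> \<le> fsucc E M 1"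
  shows "\<exists>w b. w \<in> fl E M \<and> b \<in> fl E M \<and>
    ((( -1 \<le> z \<longrightarrow> gamma E M (net1_sharp E M w b (Itv (Fin (-1)) (Fin z)))
                        \<subseteq> Fin ` {- Omega E M .. \<eta>}) \<and>
      (fsucc E M z \<le> 1 \<longrightarrow> gamma E M (net1_sharp E M w b (Itv (Fin (fsucc E M z)) (Fin 1)))
                        \<subseteq> Fin ` {fsucc E M \<eta> .. Omega E M})) \<or>
     (( -1 \<le> z \<longrightarrow> gamma E M (net1_sharp E M w b (Itv (Fin (-1)) (Fin z)))
                        \<subseteq> Fin ` {fsucc E M \<eta> .. Omega E M}) \<and>
      (fsucc E M z \<le> 1 \<longrightarrow> gamma E M (net1_sharp E M w b (Itv (Fin (fsucc E M z)) (Fin 1)))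
                        \<subseteq> Fin ` {- Omega E M .. \<eta>})))"
proof -
  interpret float_format E M
    using assms(1,2) by unfold_locales simp_all
  have "2 powr real_of_int (emin E + 5) \<le> \<bar>\<eta>\<bar>" "\<bar>\<eta>\<bar> \<le> 4 - 8 * feps M"
    using assms(7) unfolding cond1_def by blast+
  moreover have "0 < feps M"
    by (simp add: feps_def)
  ultimately have "\<eta> \<noteq> 0" "\<bar>\<eta>\<bar> < 4"
    by auto
  then show ?thesis
    using depth1_network_separates assms(6,8,9) by blast
qed

end
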